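(* Let $\gamma>0$, $c_u>0$, $c_a>0$, $c_s>0$ and $R^*=\log\left(\frac{c_u}{c_a}+1\right)$. The bi-level game described in the context admits a unique bi-level game Nash equilibrium $(p_u^*,p_a^*,\{s^*,T^*\})$, namely $$(p_u^*,p_a^*,\{s^*,T^*\})=\left(0,\,0,\,\left\{1,\ \log\left(\tfrac{c_u}{c_a}+1\right)\right\}\right).$$
   Context: $\log$ is the natural logarithm. Lower level: given a coverage level $s\in[0,1]$, a user chooses $p_u\in[0,1]$ and an attacker $p_a\in[0,1]$ in a zero-sum game with objective $K(p_u,p_a,s)=\gamma(1-s)\log\left(\frac{p_a}{p_u}+1\right)+c_up_u-c_ap_a$ (user minimizes, attacker maximizes) on the feasible set $\mathcal{S}_{u,a}(s)=\{(p_u,p_a)\in[0,1]^2:1-\gamma(1-s)\log(p_a/p_u+1)>0\}$. Conventions: when $s=1$ the term $\gamma(1-s)\log(p_a/p_u+1)$ is taken to be $0$ (all pairs feasible); when $s<1$, pairs with $p_u=0$ are regarded infeasible. A pair $(p_u^*,p_a^* )\in\mathcal{S}_{u,a}(s)$ is a saddle-point equilibrium (SPE) if $K(p_u^*,p_a,s)\le K(p_u^*,p_a^*,s)\le K(p_u,p_a^*,s)$ for all $p_a$ with $(p_u^*,p_a)\in\mathcal{S}_{u,a}(s)$ and all $p_u$ with $(p_u,p_a^* )\in\mathcal{S}_{u,a}(s)$. Upper level: the insurer chooses $(s,T)$, $0\le s\le1$, $T\ge0$, to minimize $J_i(s,T)=\gamma(1-s)R^*+c_s(sR^*-T)$ subject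 to $T\le R^*$, $s\ge T/R^*$, $T-sR^*\ge0$, and $s>1-\frac{1}{\gamma R^*}$. A tuple $(p_u^*,p_a^*,\{s^*,T^*\})$ is a bi-level game Nash equilibrium (BGNE) if $(s^*,T^* )$ solves the insurer's problem and $(p_u^*,p_a^* )$ is an SPE of the zero-sum game at coverage level $s=s^*$. *)

theory Defs
  imports Complex_Main
begin

definition risk_term :: "real \<Rightarrow> real \<Rightarrow> real \<Rightarrow> real \<Rightarrow> real" where
  "risk_term \<gamma> s pu pa = (if s = 1 then 0 else \<gamma> * (1 - s) * ln (pa / pu + 1))"

definition K :: "real \<Rightarrow> real \<Rightarrow> real \<Rightarrow> real \<Rightarrow> real \<Rightarrow> real \<Rightarrow> real" where
  "K \<gamma> cu ca pu pa s = risk_term \<gamma> s pu pa + cu * pu - ca * pa"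

definition feasible_ua :: "real \<Rightarrow> real \<Rightarrow> real \<Rightarrow> real \<Rightarrow> bool" where
  "feasible_ua \<gamma> s pu pa \<longleftrightarrow>
     pu \<in> {0..1} \<and> pa \<in> {0..1} \<and> (s < 1 \<longrightarrow> pu \<noteq> 0) \<and>
     1 - risk_term \<gamma> s pu pa > 0"

definition is_SPE :: "real \<Rightarrow> real \<Rightarrow> real \<Rightarrow> real \<Rightarrow> real \<Rightarrow> real \<Rightarrow> bool" where
  "is_SPE \<gamma> cu ca s pu pa \<longleftrightarrow>
     feasible_ua \<gamma> s pu pa \<and>
     (\<forall>pa'. feasible_ua \<gamma> s pu pa' \<longrightarrow> K \<gamma> cu ca pu pa' s \<le> K \<gamma> cu ca pu pa s) \<and>
     (\<forall>pu'. feasible_ua \<gamma> s pu' pa \<longrightarrow> K \<gamma> cu ca pu pa s \<le> K \<gamma> cu ca pu' pa s)"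

definition J_ins :: "real \<Rightarrow> real \<Rightarrow> real \<Rightarrow> real \<Rightarrow> real \<Rightarrow> real" where
  "J_ins \<gamma> cs R s T = \<gamma> * (1 - s) * R + cs * (s * R - T)"

definition insurer_feasible :: "real \<Rightarrow> real \<Rightarrow> real \<Rightarrow> real \<Rightarrow> bool" where
  "insurer_feasible \<gamma> R s T \<longleftrightarrow>
     0 \<le> s \<and> s \<le> 1 \<and> T \<ge> 0 \<and> T \<le> R \<and> s \<ge> T / R \<and> T - s * R \<ge> 0 \<and>
     s > 1 - 1 / (\<gamma> * R)"

definition insurer_optimal :: "real \<Rightarrow> real \<Rightarrow> real \<Rightarrow> real \<Rightarrow> real \<Rightarrow> bool" where
  "insurer_optimal \<gamma> cs R s T \<longleftrightarrow>
     insurer_feasible \<gamma> R s T \<and>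
     (\<forall>s' T'. insurer_feasible \<gamma> R s' T' \<longrightarrow> J_ins \<gamma> cs R s T \<le> J_ins \<gamma> cs R s' T')"

definition is_BGNE :: "real \<Rightarrow> real \<Rightarrow> real \<Rightarrow> real \<Rightarrow> real \<Rightarrow> real \<Rightarrow> real \<Rightarrow> real \<Rightarrow> real \<Rightarrow> bool" where
  "is_BGNE \<gamma> cu ca cs R pu pa s T \<longleftrightarrow>
     insurer_optimal \<gamma> cs R s T \<and> is_SPE \<gamma> cu ca s pu pa"

end

theory Submission
  imports Defs
begin

text \<open>The premium constraints \<open>T \<ge> s R\<close> and \<open>s \<ge> T / R\<close> pin the premium to \<open>T = s R\<close>, so the
  insurer's cost collapses to \<open>\<gamma> (1 - s) R\<close>, which is minimised exactly at full coverage
  \<open>s = 1\<close>. At full coverage the risk term vanishes and the zero-sum game becomes linear,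
  \<open>c\<^sub>u p\<^sub>u - c\<^sub>a p\<^sub>a\<close>, so both players choose probability \<open>0\<close>.\<close>

lemma insurer_feasible_premium:
  assumes "R > 0" and "insurer_feasible \<gamma> R s T"
  shows "T = s * R" and "s \<le> 1"
proof -
  from assms(2) have "T \<ge> s * R" "T / R \<le> s" "s \<le> 1"
    unfolding insurer_feasible_def by auto
  with assms(1) show "T = s * R" "s \<le> 1"
    by (auto simp: divide_le_eq)
qed

lemma insurer_feasible_full_coverage:
  assumes "\<gamma> > 0" and "R > 0"
  shows "insurer_feasible \<gamma> R 1 R"
  using assms unfolding insurer_feasible_def by simp

lemma insurer_optimal_iff_full_coverage:
  assumes "\<gamma> > 0" and "R > 0"
  shows "insurer_optimal \<gamma> cs R s T \<longleftrightarrow> s = 1 \<and> T = R"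
proof
  assume opt: "insurer_optimal \<gamma> cs R s T"
  then have feas: "insurer_feasible \<gamma> R s T"
    and "J_ins \<gamma> cs R s T \<le> J_ins \<gamma> cs R 1 R"
    using insurer_feasible_full_coverage[OF assms] unfolding insurer_optimal_def by auto
  moreover note insurer_feasible_premium[OF assms(2) feas]
  ultimately have "(1 - s) * (\<gamma> * R) \<le> 0"
    unfolding J_ins_def by (simp add: algebra_simps)
  with assms \<open>s \<le> 1\<close> have "s = 1"
    by (simp add: mult_le_0_iff)
  with \<open>T = s * R\<close> show "s = 1 \<and> T = R" by simp
next
  assume "s = 1 \<and> T = R"
  moreover have "J_ins \<gamma> cs R 1 R \<le> J_ins \<gamma> cs R s' T'" if "insurer_feasible \<gamma> R s' T'" for s' T'
    using insurer_feasible_premium[OF assms(2) that] assms unfolding J_ins_def by simp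
  ultimately show "insurer_optimal \<gamma> cs R s T"
    using insurer_feasible_full_coverage[OF assms] unfolding insurer_optimal_def by simp
qed

lemma feasible_ua_full_coverage:
  "feasible_ua \<gamma> 1 pu pa \<longleftrightarrow> pu \<in> {0..1} \<and> pa \<in> {0..1}"
  unfolding feasible_ua_def risk_term_def by simp

lemma K_full_coverage: "K \<gamma> cu ca pu pa 1 = cu * pu - ca * pa"
  unfolding K_def risk_term_def by simp

lemma is_SPE_full_coverage_iff:
  assumes "cu > 0" and "ca > 0"
  shows "is_SPE \<gamma> cu ca 1 pu pa \<longleftrightarrow> pu = 0 \<and> pa = 0"
proof
  assume spe: "is_SPE \<gamma> cu ca 1 pu pa"
  then have range: "pu \<in> {0..1}" "pa \<in> {0..1}"
    unfolding is_SPE_def feasible_ua_full_coverage by auto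
  from spe range have "K \<gamma> cu ca pu 0 1 \<le> K \<gamma> cu ca pu pa 1"
    and "K \<gamma> cu ca pu pa 1 \<le> K \<gamma> cu ca 0 pa 1"
    unfolding is_SPE_def feasible_ua_full_coverage by auto
  then have "ca * pa \<le> 0" and "cu * pu \<le> 0"
    unfolding K_full_coverage by simp_all
  with assms range show "pu = 0 \<and> pa = 0"
    by (auto simp: mult_le_0_iff)
next
  assume "pu = 0 \<and> pa = 0"
  with assms show "is_SPE \<gamma> cu ca 1 pu pa"
    unfolding is_SPE_def feasible_ua_full_coverage K_full_coverage by simp
qed

theorem proposition5:
  fixes \<gamma> cu ca cs R :: real
  assumes "\<gamma> > 0" and "cu > 0" and "ca > 0" and "cs > 0"
    and "R = ln (cu / ca + 1)"
  shows "{(pu, pa, s, T). is_BGNE \<gamma> cu ca cs R pu pa s T} = {(0, 0, 1, ln (cu / ca + 1))}"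
proof -
  have "cu / ca > 0"
    using assms(2,3) by simp
  with assms(5) have "R > 0"
    by simp
  then have "is_BGNE \<gamma> cu ca cs R pu pa s T \<longleftrightarrow> pu = 0 \<and> pa = 0 \<and> s = 1 \<and> T = R"
    for pu pa s T
    unfolding is_BGNE_def
    using insurer_optimal_iff_full_coverage[OF assms(1)] is_SPE_full_coverage_iff[OF assms(2,3)]
    by auto
  with assms(5) show ?thesis by auto
qed

end
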